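(* Let $(X_n)$ be generated by the $\lambda$-SAGA algorithm (defined in the context) with fixed $\lambda\in[0,1]$ and step $\gamma_n=c/n^\alpha$, where $c>0$ and $1/2<\alpha\le1$. Assume: (A1) $f$ is continuously differentiable with a unique $x^*$ such that $\nabla f(x^* )=0$; (A3) there is $L>0$ with $\frac1N\sum_{k=1}^N\|\nabla f_k(x)-\nabla f_k(x^* )\|^2\le L\|x-x^*\|^2$ for all $x$; (A5) there is $\mu>0$ with $\langle x-x^*,\nabla f(x)\rangle\ge\mu\|x-x^*\|^2$ for all $x$. Suppose $2c\mu\le2^\alpha$, and additionally $2c\mu>1$ if $\alpha=1$. Then there exists $K>0$ such that for all $n\ge1$, $\mathbb E\big[\|X_n-x^*\|^2\big]\le K/n^\alpha$.
   Context: Let $N,d\ge1$ be integers, $f_1,\dots,f_N:\mathbb R^d\to\mathbb R$ differentiable, and $f=\frac1N\sum_{k=1}^N f_k$. The $\lambda$-SAGA algorithm with parameter $\lambda\in[0,1]$ and positive deterministic steps $(\gamma_n)_{n\ge1}$: let $X_0,X_1$ be square-integrable random vectors in $\mathbb R^d$ and $(U_n)_{n\ge2}$ i.i.d. uniform on $\{1,\dots,N\}$, independent of $(X_0,X_1)$. Set $g_{1,k}=\nabla f_k(X_0)$ for $k=1,\dots,N$ and for $n\ge1$: $X_{n+1}=X_n-\gamma_n\Big(\nabla f_{U_{n+1}}(X_n)-\lambda\big(g_{n,U_{n+1}}-\frac1N\sum_{k=1}^N g_{n,k}\big)\Big)$, and $g_{n+1,k}=\nabla f_k(X_n)$ if $U_{n+1}=k$,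 $g_{n+1,k}=g_{n,k}$ otherwise. *)

theory Defs
  imports "HOL-Probability.Probability"
begin

text \<open>Gradients are given as g k x (the gradient of f_k at x), indices k in {1..N}.
  The state at index n >= 1 is (X_n, table g_{n,.}); saga_st m is the state at index m+1.
  u j is the value of U_j.\<close>

primrec saga_st :: "nat \<Rightarrow> (nat \<Rightarrow> 'a::real_normed_vector \<Rightarrow> 'a) \<Rightarrow> real \<Rightarrow> (nat \<Rightarrow> real)
    \<Rightarrow> 'a \<Rightarrow> 'a \<Rightarrow> (nat \<Rightarrow> nat) \<Rightarrow> nat \<Rightarrow> 'a \<times> (nat \<Rightarrow> 'a)" where
  "saga_st N g lam gam x0 x1 u 0 = (x1, (\<lambda>k. g k x0))"
| "saga_st N g lam gam x0 x1 u (Suc m) =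
     (let (x, t) = saga_st N g lam gam x0 x1 u m; n = Suc m; k = u (Suc n) in
       (x - gam n *\<^sub>R (g k x - lam *\<^sub>R (t k - (1 / real N) *\<^sub>R (\<Sum>j\<in>{1..N}. t j))),
        t(k := g k x)))"

fun saga_X :: "nat \<Rightarrow> (nat \<Rightarrow> 'a::real_normed_vector \<Rightarrow> 'a) \<Rightarrow> real \<Rightarrow> (nat \<Rightarrow> real)
    \<Rightarrow> 'a \<Rightarrow> 'a \<Rightarrow> (nat \<Rightarrow> nat) \<Rightarrow> nat \<Rightarrow> 'a" where
  "saga_X N g lam gam x0 x1 u 0 = x0"
| "saga_X N g lam gam x0 x1 u (Suc m) = fst (saga_st N g lam gam x0 x1 u m)"

end

theory Submission
  imports Defs
begin

text \<open>The proof tracks the Lyapunov function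
  V_n = |X_n - x*|^2 + 6 \<gamma>_n^2 \<Sum>_k |g_{n,k} - \<nabla>f_k(x*)|^2,
  which couples the distance to the minimiser with the staleness of the gradient table.
  Averaging one step over the uniformly drawn index, which is independent of the past, gives
  E V_{n+1} \<le> max (1 - 2\<mu>\<gamma>_n + 9L\<gamma>_n^2, 1 - 1/(2N)) E V_n + C \<gamma>_n^2.
  For \<gamma>_n = c/n^\<alpha> this contraction beats the relative decrease \<gamma>_n - \<gamma>_{n+1} \<le> \<gamma>_n/n of the
  step size by a margin \<kappa>\<gamma>_n^2 (for \<alpha> = 1 exactly when 2c\<mu> > 1), and a Chung-type induction turns
  the recursion into E V_n = O(\<gamma>_n).\<close>

lemma norm_add3_power2_le:
  fixes a b c :: "'a::real_normed_vector"
  shows "(norm (a + b + c))\<^sup>2 \<le> 3 * ((norm a)\<^sup>2 + (norm b)\<^sup>2 + (norm c)\<^sup>2)"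
proof -
  have "norm (a + b + c) \<le> norm a + norm b + norm c"
    by (metis add_right_mono norm_triangle_ineq order_trans)
  then have "(norm (a + b + c))\<^sup>2 \<le> (norm a + norm b + norm c)\<^sup>2"
    by (simp add: power_mono)
  also have "\<dots> \<le> 3 * ((norm a)\<^sup>2 + (norm b)\<^sup>2 + (norm c)\<^sup>2)"
    using sum_squares_ge_zero[of "norm a - norm b" "norm a - norm c"]
      zero_le_power2[of "norm b - norm c"]
    by (simp add: power2_eq_square algebra_simps)
  finally show ?thesis .
qed

lemma sum_norm_diff_mean_le:
  fixes b :: "'i \<Rightarrow> 'a::real_inner"
  assumes "finite K" "K \<noteq> {}"
  shows "(\<Sum>k\<in>K. (norm (b k - (1 / real (card K)) *\<^sub>R (\<Sum>j\<in>K. b j)))\<^sup>2) \<le> (\<Sum>k\<in>K. (norm (b k))\<^sup>2)"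
proof -
  define n where "n = real (card K)"
  have n: "n > 0" using assms by (simp add: n_def card_gt_0_iff)
  define m where "m = (1 / n) *\<^sub>R (\<Sum>j\<in>K. b j)"
  have sum_b: "(\<Sum>j\<in>K. b j) = n *\<^sub>R m" using n by (simp add: m_def)
  have "(\<Sum>k\<in>K. (norm (b k - m))\<^sup>2) = (\<Sum>k\<in>K. (norm (b k))\<^sup>2 - 2 * (b k \<bullet> m) + (norm m)\<^sup>2)"
    by (intro sum.cong refl) (simp add: power2_norm_eq_inner inner_diff_left inner_diff_right inner_commute)
  also have "\<dots> = (\<Sum>k\<in>K. (norm (b k))\<^sup>2) - 2 * ((\<Sum>k\<in>K. b k) \<bullet> m) + n * (norm m)\<^sup>2"
    by (simp add: sum.distrib sum_subtractf sum_distrib_left inner_sum_left n_def)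
  also have "\<dots> = (\<Sum>k\<in>K. (norm (b k))\<^sup>2) - n * (norm m)\<^sup>2"
    by (simp add: sum_b power2_norm_eq_inner)
  also have "\<dots> \<le> (\<Sum>k\<in>K. (norm (b k))\<^sup>2)"
    using n by simp
  finally show ?thesis by (simp add: m_def n_def)
qed

lemma sum_sum_fun_upd:
  fixes f :: "'i \<Rightarrow> 'b \<Rightarrow> real"
  assumes "finite K"
  shows "(\<Sum>k\<in>K. \<Sum>j\<in>K. f j ((t(k := y k)) j))
    = (real (card K) - 1) * (\<Sum>j\<in>K. f j (t j)) + (\<Sum>k\<in>K. f k (y k))"
proof -
  have "(\<Sum>j\<in>K. f j ((t(k := y k)) j)) = (\<Sum>j\<in>K. f j (t j)) - f k (t k) + f k (y k)"
    if k: "k \<in> K" for k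
  proof -
    have "(\<Sum>j\<in>K-{k}. f j ((t(k := y k)) j)) = (\<Sum>j\<in>K-{k}. f j (t j))"
      by (rule sum.cong) auto
    then show ?thesis
      using sum.remove[OF assms k, of "\<lambda>j. f j ((t(k := y k)) j)"] sum.remove[OF assms k, of "\<lambda>j. f j (t j)"]
      by simp
  qed
  then have "(\<Sum>k\<in>K. \<Sum>j\<in>K. f j ((t(k := y k)) j))
      = (\<Sum>k\<in>K. (\<Sum>j\<in>K. f j (t j)) - f k (t k) + f k (y k))"
    by (rule sum.cong[OF refl])
  also have "\<dots> = (real (card K) - 1) * (\<Sum>j\<in>K. f j (t j)) + (\<Sum>k\<in>K. f k (y k))"
    by (simp add: sum.distrib sum_subtractf algebra_simps)
  finally show ?thesis .
qed

lemma sum_saga_direction: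
  fixes t :: "'i \<Rightarrow> 'a::real_vector"
  assumes "finite K"
  shows "(\<Sum>k\<in>K. g k x - lam *\<^sub>R (t k - (1 / real (card K)) *\<^sub>R (\<Sum>j\<in>K. t j))) = (\<Sum>k\<in>K. g k x)"
proof (cases "K = {}")
  case False
  have "(\<Sum>k\<in>K. t k - (1 / real (card K)) *\<^sub>R (\<Sum>j\<in>K. t j)) = 0"
    using assms False by (simp add: sum_subtractf sum_constant_scaleR)
  then show ?thesis
    by (simp add: sum_subtractf scaleR_sum_right[symmetric])
qed simp

lemma sum_norm_saga_direction_le:
  fixes g :: "'i \<Rightarrow> 'a::real_inner \<Rightarrow> 'a"
  assumes K: "finite K" "K \<noteq> {}" and lam: "0 \<le> lam" "lam \<le> 1"
    and zero: "(\<Sum>k\<in>K. g k xs) = 0"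
  shows "(\<Sum>k\<in>K. (norm (g k x - lam *\<^sub>R (t k - (1 / real (card K)) *\<^sub>R (\<Sum>j\<in>K. t j))))\<^sup>2)
    \<le> 3 * ((\<Sum>k\<in>K. (norm (g k x - g k xs))\<^sup>2) + (\<Sum>k\<in>K. (norm (t k - g k xs))\<^sup>2)
            + (\<Sum>k\<in>K. (norm (g k xs))\<^sup>2))"
proof -
  define b where "b k = t k - g k xs" for k
  define mb where "mb = (1 / real (card K)) *\<^sub>R (\<Sum>j\<in>K. b j)"
  have mean: "(1 / real (card K)) *\<^sub>R (\<Sum>j\<in>K. t j) = mb"
    using zero by (simp add: mb_def b_def sum_subtractf)
  have shrink: "(norm (c *\<^sub>R w))\<^sup>2 \<le> (norm w)\<^sup>2" if "\<bar>c\<bar> \<le> 1" for c :: real and w :: 'a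
    using that by (simp add: power_mult_distrib abs_le_square_iff[of c 1, simplified] mult_left_le_one_le)
  have "(norm (g k x - lam *\<^sub>R (t k - mb)))\<^sup>2
      \<le> 3 * ((norm (g k x - g k xs))\<^sup>2 + (norm (b k - mb))\<^sup>2 + (norm (g k xs))\<^sup>2)" for k
  proof -
    have "g k x - lam *\<^sub>R (t k - mb) = (g k x - g k xs) + (- lam) *\<^sub>R (b k - mb) + (1 - lam) *\<^sub>R g k xs"
      by (simp add: b_def algebra_simps)
    then have "(norm (g k x - lam *\<^sub>R (t k - mb)))\<^sup>2
        \<le> 3 * ((norm (g k x - g k xs))\<^sup>2 + (norm ((- lam) *\<^sub>R (b k - mb)))\<^sup>2 + (norm ((1 - lam) *\<^sub>R g k xs))\<^sup>2)"
      by (simp only: norm_add3_power2_le)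
    also have "\<dots> \<le> 3 * ((norm (g k x - g k xs))\<^sup>2 + (norm (b k - mb))\<^sup>2 + (norm (g k xs))\<^sup>2)"
      using lam by (intro mult_left_mono add_mono order_refl shrink) auto
    finally show ?thesis .
  qed
  then have "(\<Sum>k\<in>K. (norm (g k x - lam *\<^sub>R (t k - mb)))\<^sup>2)
      \<le> (\<Sum>k\<in>K. 3 * ((norm (g k x - g k xs))\<^sup>2 + (norm (b k - mb))\<^sup>2 + (norm (g k xs))\<^sup>2))"
    by (rule sum_mono)
  also have "\<dots> = 3 * ((\<Sum>k\<in>K. (norm (g k x - g k xs))\<^sup>2) + (\<Sum>k\<in>K. (norm (b k - mb))\<^sup>2)
      + (\<Sum>k\<in>K. (norm (g k xs))\<^sup>2))"
    by (simp add: sum.distrib sum_distrib_left)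
  also have "(\<Sum>k\<in>K. (norm (b k - mb))\<^sup>2) \<le> (\<Sum>k\<in>K. (norm (b k))\<^sup>2)"
    unfolding mb_def using K by (rule sum_norm_diff_mean_le)
  finally show ?thesis
    by (simp add: mean b_def)
qed

fun saga_step :: "nat \<Rightarrow> (nat \<Rightarrow> 'a::real_normed_vector \<Rightarrow> 'a) \<Rightarrow> real \<Rightarrow> real
    \<Rightarrow> 'a \<times> (nat \<Rightarrow> 'a) \<Rightarrow> nat \<Rightarrow> 'a \<times> (nat \<Rightarrow> 'a)" where
  "saga_step N g lam \<gamma> (x, t) k =
     (x - \<gamma> *\<^sub>R (g k x - lam *\<^sub>R (t k - (1 / real N) *\<^sub>R (\<Sum>j\<in>{1..N}. t j))), t(k := g k x))"

lemma saga_st_Suc_step: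
  "saga_st N g lam gam x0 x1 u (Suc m) =
     saga_step N g lam (gam (Suc m)) (saga_st N g lam gam x0 x1 u m) (u (Suc (Suc m)))"
  by (cases "saga_st N g lam gam x0 x1 u m") (simp add: Let_def)

lemma saga_st_cong:
  assumes "\<And>j. 2 \<le> j \<Longrightarrow> j \<le> Suc m \<Longrightarrow> u j = v j"
  shows "saga_st N g lam gam x0 x1 u m = saga_st N g lam gam x0 x1 v m"
  using assms
proof (induction m)
  case (Suc m)
  then show ?case
    by (simp only: saga_st_Suc_step)
qed simp

lemma saga_st_measurable:
  fixes g :: "nat \<Rightarrow> 'a::euclidean_space \<Rightarrow> 'a"
  assumes g: "\<And>k. k \<in> {1..N} \<Longrightarrow> g k \<in> borel_measurable borel"
    and x0: "x0 \<in> borel_measurable S" and x1: "x1 \<in> borel_measurable S"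
    and u: "\<And>j. u j \<in> measurable S (count_space UNIV)"
    and u_range: "\<And>j s. s \<in> space S \<Longrightarrow> u j s \<in> {1..N}"
  shows "(\<lambda>s. fst (saga_st N g lam gam (x0 s) (x1 s) (\<lambda>j. u j s) m)) \<in> borel_measurable S \<and>
    (\<forall>k\<in>{1..N}. (\<lambda>s. snd (saga_st N g lam gam (x0 s) (x1 s) (\<lambda>j. u j s) m) k) \<in> borel_measurable S)"
proof (induction m)
  case 0
  have "(\<lambda>s. g k (x0 s)) \<in> borel_measurable S" if "k \<in> {1..N}" for k
    using measurable_compose[OF x0 g[OF that]] by simp
  then show ?case using x1 by simp
next
  case (Suc m)
  define x where "x s = fst (saga_st N g lam gam (x0 s) (x1 s) (\<lambda>j. u j s) m)" for s
  define t where "t s = snd (saga_st N g lam gam (x0 s) (x1 s) (\<lambda>j. u j s) m)" for s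
  have x[measurable]: "x \<in> borel_measurable S"
    using Suc by (simp add: x_def[abs_def])
  have t: "(\<lambda>s. t s k) \<in> borel_measurable S" if "k \<in> {1..N}" for k
    using Suc that by (simp add: t_def)
  have gx: "(\<lambda>s. g k (x s)) \<in> borel_measurable S" if "k \<in> {1..N}" for k
    using measurable_compose[OF x g[OF that]] by simp
  have [measurable]: "(\<lambda>s. \<Sum>j\<in>{1..N}. t s j) \<in> borel_measurable S"
    using t by (intro borel_measurable_sum) auto
  have u': "u j \<in> measurable S (count_space {1..N})" for j
    unfolding measurable_count_space_eq2[OF finite_atLeastAtMost]
    using u_range measurable_sets[OF u, of "{_}"] by auto
  have step: "saga_st N g lam gam (x0 s) (x1 s) (\<lambda>j. u j s) (Suc m) =
      saga_step N g lam (gam (Suc m)) (x s, t s) (u (Suc (Suc m)) s)" for s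
    by (simp only: saga_st_Suc_step x_def t_def prod.collapse)
  have "(\<lambda>s. x s - gam (Suc m) *\<^sub>R (g k (x s) - lam *\<^sub>R (t s k - (1 / real N) *\<^sub>R (\<Sum>j\<in>{1..N}. t s j))))
      \<in> borel_measurable S" if "k \<in> {1..N}" for k
    using gx[OF that] t[OF that] by measurable
  then have "(\<lambda>s. fst (saga_step N g lam (gam (Suc m)) (x s, t s) (u (Suc (Suc m)) s))) \<in> borel_measurable S"
    by (auto intro: measurable_compose_countable'[OF _ u'])
  moreover have "(\<lambda>s. snd (saga_step N g lam (gam (Suc m)) (x s, t s) (u (Suc (Suc m)) s)) i) \<in> borel_measurable S"
    if "i \<in> {1..N}" for i
  proof -
    have "(\<lambda>s. ((t s)(k := g k (x s))) i) \<in> borel_measurable S" if "k \<in> {1..N}" for k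
      using gx[OF that] t[OF \<open>i \<in> {1..N}\<close>] by (cases "i = k") simp_all
    then show ?thesis
      by (auto intro: measurable_compose_countable'[OF _ u'])
  qed
  ultimately show ?case
    unfolding step by blast
qed

definition saga_lyapunov :: "nat \<Rightarrow> (nat \<Rightarrow> 'a::real_normed_vector \<Rightarrow> 'a) \<Rightarrow> 'a \<Rightarrow> real
    \<Rightarrow> 'a \<times> (nat \<Rightarrow> 'a) \<Rightarrow> real" where
  "saga_lyapunov N g xs \<beta> st =
     (norm (fst st - xs))\<^sup>2 + \<beta> * (\<Sum>j\<in>{1..N}. (norm (snd st j - g j xs))\<^sup>2)"

lemma saga_lyapunov_nonneg: "\<beta> \<ge> 0 \<Longrightarrow> saga_lyapunov N g xs \<beta> st \<ge> 0"
  by (simp add: saga_lyapunov_def sum_nonneg)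

lemma saga_lyapunov_mono: "\<beta> \<le> \<beta>' \<Longrightarrow> saga_lyapunov N g xs \<beta> st \<le> saga_lyapunov N g xs \<beta>' st"
  by (simp add: saga_lyapunov_def mult_right_mono sum_nonneg)

lemma saga_lyapunov_ge_dist: "\<beta> \<ge> 0 \<Longrightarrow> (norm (fst st - xs))\<^sup>2 \<le> saga_lyapunov N g xs \<beta> st"
  by (simp add: saga_lyapunov_def sum_nonneg)

lemma saga_lyapunov_saga_st_measurable:
  fixes g :: "nat \<Rightarrow> 'a::euclidean_space \<Rightarrow> 'a"
  assumes g: "\<And>k. k \<in> {1..N} \<Longrightarrow> g k \<in> borel_measurable borel"
    and "x0 \<in> borel_measurable S" "x1 \<in> borel_measurable S"
    and "\<And>j. u j \<in> measurable S (count_space UNIV)"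
    and "\<And>j s. s \<in> space S \<Longrightarrow> u j s \<in> {1..N}"
  shows "(\<lambda>s. saga_lyapunov N g xs \<beta> (saga_st N g lam gam (x0 s) (x1 s) (\<lambda>j. u j s) m)) \<in> borel_measurable S"
proof -
  note st = saga_st_measurable[where g=g and u=u and lam=lam and gam=gam and m=m, OF assms]
  have [measurable]: "(\<lambda>s. fst (saga_st N g lam gam (x0 s) (x1 s) (\<lambda>j. u j s) m)) \<in> borel_measurable S"
    using st by blast
  have "(\<lambda>s. (norm (snd (saga_st N g lam gam (x0 s) (x1 s) (\<lambda>j. u j s) m) j - g j xs))\<^sup>2) \<in> borel_measurable S"
    if "j \<in> {1..N}" for j
  proof -
    have [measurable]: "(\<lambda>s. snd (saga_st N g lam gam (x0 s) (x1 s) (\<lambda>j. u j s) m) j) \<in> borel_measurable S"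
      using st that by blast
    show ?thesis by measurable
  qed
  then have [measurable]: "(\<lambda>s. \<Sum>j\<in>{1..N}. (norm (snd (saga_st N g lam gam (x0 s) (x1 s) (\<lambda>j. u j s) m) j - g j xs))\<^sup>2)
      \<in> borel_measurable S"
    by (rule borel_measurable_sum)
  show ?thesis
    unfolding saga_lyapunov_def by measurable
qed

lemma sum_saga_step_dist_le:
  fixes g :: "nat \<Rightarrow> 'a::real_inner \<Rightarrow> 'a"
  assumes N: "N \<ge> 1" and lam: "0 \<le> lam" "lam \<le> 1" and \<gamma>: "\<gamma> \<ge> 0"
    and zero: "(\<Sum>k\<in>{1..N}. g k xs) = 0"
    and lip: "(\<Sum>k\<in>{1..N}. (norm (g k x - g k xs))\<^sup>2) \<le> real N * L * (norm (x - xs))\<^sup>2"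
    and strong: "real N * \<mu> * (norm (x - xs))\<^sup>2 \<le> (x - xs) \<bullet> (\<Sum>k\<in>{1..N}. g k x)"
  shows "(\<Sum>k\<in>{1..N}. (norm (fst (saga_step N g lam \<gamma> (x, t) k) - xs))\<^sup>2)
    \<le> real N * (1 - 2 * \<gamma> * \<mu> + 3 * L * \<gamma>\<^sup>2) * (norm (x - xs))\<^sup>2
       + 3 * \<gamma>\<^sup>2 * (\<Sum>j\<in>{1..N}. (norm (t j - g j xs))\<^sup>2) + 3 * \<gamma>\<^sup>2 * (\<Sum>j\<in>{1..N}. (norm (g j xs))\<^sup>2)"
proof -
  define e where "e = x - xs"
  define v where "v k = g k x - lam *\<^sub>R (t k - (1 / real N) *\<^sub>R (\<Sum>j\<in>{1..N}. t j))" for k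
  have "(\<Sum>k\<in>{1..N}. (norm (fst (saga_step N g lam \<gamma> (x, t) k) - xs))\<^sup>2)
      = (\<Sum>k\<in>{1..N}. (norm e)\<^sup>2 - 2 * \<gamma> * (e \<bullet> v k) + \<gamma>\<^sup>2 * (norm (v k))\<^sup>2)"
  proof (intro sum.cong refl)
    fix k
    have diff: "fst (saga_step N g lam \<gamma> (x, t) k) - xs = e - \<gamma> *\<^sub>R v k"
      by (simp add: e_def v_def algebra_simps)
    show "(norm (fst (saga_step N g lam \<gamma> (x, t) k) - xs))\<^sup>2
        = (norm e)\<^sup>2 - 2 * \<gamma> * (e \<bullet> v k) + \<gamma>\<^sup>2 * (norm (v k))\<^sup>2"
      unfolding diff power2_norm_eq_inner by (simp add: inner_diff_left inner_diff_right inner_commute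
          power2_eq_square algebra_simps)
  qed
  also have "\<dots> = real N * (norm e)\<^sup>2 - 2 * \<gamma> * (e \<bullet> (\<Sum>k\<in>{1..N}. v k))
      + \<gamma>\<^sup>2 * (\<Sum>k\<in>{1..N}. (norm (v k))\<^sup>2)"
    by (simp add: sum.distrib sum_subtractf sum_distrib_left inner_sum_right)
  also have "e \<bullet> (\<Sum>k\<in>{1..N}. v k) = e \<bullet> (\<Sum>k\<in>{1..N}. g k x)"
    using sum_saga_direction[of "{1..N}" g x lam t] by (simp add: v_def)
  finally have expand: "(\<Sum>k\<in>{1..N}. (norm (fst (saga_step N g lam \<gamma> (x, t) k) - xs))\<^sup>2)
      = real N * (norm e)\<^sup>2 - 2 * \<gamma> * (e \<bullet> (\<Sum>k\<in>{1..N}. g k x))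
        + \<gamma>\<^sup>2 * (\<Sum>k\<in>{1..N}. (norm (v k))\<^sup>2)" .
  have "(\<Sum>k\<in>{1..N}. (norm (v k))\<^sup>2) \<le> 3 * (real N * L * (norm e)\<^sup>2
      + (\<Sum>j\<in>{1..N}. (norm (t j - g j xs))\<^sup>2) + (\<Sum>j\<in>{1..N}. (norm (g j xs))\<^sup>2))"
    using sum_norm_saga_direction_le[of "{1..N}" lam g xs x t] N lam zero lip
    by (simp add: v_def e_def)
  then have "\<gamma>\<^sup>2 * (\<Sum>k\<in>{1..N}. (norm (v k))\<^sup>2) \<le> \<gamma>\<^sup>2 * (3 * (real N * L * (norm e)\<^sup>2
      + (\<Sum>j\<in>{1..N}. (norm (t j - g j xs))\<^sup>2) + (\<Sum>j\<in>{1..N}. (norm (g j xs))\<^sup>2)))"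
    by (rule mult_left_mono) simp
  moreover have "2 * \<gamma> * (real N * \<mu> * (norm e)\<^sup>2) \<le> 2 * \<gamma> * (e \<bullet> (\<Sum>k\<in>{1..N}. g k x))"
    using strong \<gamma> by (simp add: e_def mult_left_mono)
  ultimately show ?thesis
    unfolding expand by (simp add: e_def algebra_simps)
qed

lemma sum_saga_step_table_le:
  fixes g :: "nat \<Rightarrow> 'a::real_normed_vector \<Rightarrow> 'a"
  assumes lip: "(\<Sum>k\<in>{1..N}. (norm (g k x - g k xs))\<^sup>2) \<le> real N * L * (norm (x - xs))\<^sup>2"
  shows "(\<Sum>k\<in>{1..N}. \<Sum>j\<in>{1..N}. (norm (snd (saga_step N g lam \<gamma> (x, t) k) j - g j xs))\<^sup>2)
    \<le> (real N - 1) * (\<Sum>j\<in>{1..N}. (norm (t j - g j xs))\<^sup>2) + real N * L * (norm (x - xs))\<^sup>2"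
  using sum_sum_fun_upd[where K="{1..N}" and f="\<lambda>j w. (norm (w - g j xs))\<^sup>2" and t=t
      and y="\<lambda>k. g k x"] lip
  by simp

text \<open>The table weight 6\<gamma>^2 is what lets the contraction 1 - 1/N of the table absorb the
  term 3\<gamma>^2 S coming from the iterate: 3 + 6(N - 1) = 6N(1 - 1/(2N)).\<close>
lemma sum_saga_lyapunov_step_le:
  fixes g :: "nat \<Rightarrow> 'a::real_inner \<Rightarrow> 'a"
  assumes N: "N \<ge> 1" and lam: "0 \<le> lam" "lam \<le> 1" and \<gamma>: "\<gamma> \<ge> 0"
    and zero: "(\<Sum>k\<in>{1..N}. g k xs) = 0"
    and lip: "(\<Sum>k\<in>{1..N}. (norm (g k x - g k xs))\<^sup>2) \<le> real N * L * (norm (x - xs))\<^sup>2"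
    and strong: "real N * \<mu> * (norm (x - xs))\<^sup>2 \<le> (x - xs) \<bullet> (\<Sum>k\<in>{1..N}. g k x)"
  shows "(\<Sum>k\<in>{1..N}. saga_lyapunov N g xs (6 * \<gamma>\<^sup>2) (saga_step N g lam \<gamma> (x, t) k))
    \<le> real N * (max (1 - 2 * \<gamma> * \<mu> + 9 * L * \<gamma>\<^sup>2) (1 - 1 / (2 * real N))
                   * saga_lyapunov N g xs (6 * \<gamma>\<^sup>2) (x, t)
                 + 3 * (\<Sum>j\<in>{1..N}. (norm (g j xs))\<^sup>2) / real N * \<gamma>\<^sup>2)"
proof -
  define E where "E = (norm (x - xs))\<^sup>2"
  define S where "S = (\<Sum>j\<in>{1..N}. (norm (t j - g j xs))\<^sup>2)"
  define Ss where "Ss = (\<Sum>j\<in>{1..N}. (norm (g j xs))\<^sup>2)"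
  define q where "q = max (1 - 2 * \<gamma> * \<mu> + 9 * L * \<gamma>\<^sup>2) (1 - 1 / (2 * real N))"
  have n: "real N > 0" using N by simp
  have "(\<Sum>k\<in>{1..N}. saga_lyapunov N g xs (6 * \<gamma>\<^sup>2) (saga_step N g lam \<gamma> (x, t) k))
      = (\<Sum>k\<in>{1..N}. (norm (fst (saga_step N g lam \<gamma> (x, t) k) - xs))\<^sup>2)
        + 6 * \<gamma>\<^sup>2 * (\<Sum>k\<in>{1..N}. \<Sum>j\<in>{1..N}. (norm (snd (saga_step N g lam \<gamma> (x, t) k) j - g j xs))\<^sup>2)"
    by (simp only: saga_lyapunov_def sum.distrib sum_distrib_left)
  also have "\<dots> \<le> real N * (1 - 2 * \<gamma> * \<mu> + 3 * L * \<gamma>\<^sup>2) * E + 3 * \<gamma>\<^sup>2 * S + 3 * \<gamma>\<^sup>2 * Ss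
      + 6 * \<gamma>\<^sup>2 * ((real N - 1) * S + real N * L * E)"
    unfolding E_def S_def Ss_def
    by (intro add_mono mult_left_mono sum_saga_step_dist_le sum_saga_step_table_le assms) simp
  also have "\<dots> = real N * (1 - 2 * \<gamma> * \<mu> + 9 * L * \<gamma>\<^sup>2) * E
      + real N * (1 - 1 / (2 * real N)) * (6 * \<gamma>\<^sup>2 * S) + 3 * \<gamma>\<^sup>2 * Ss"
    using n by (simp add: field_simps)
  also have "\<dots> \<le> real N * q * E + real N * q * (6 * \<gamma>\<^sup>2 * S) + 3 * \<gamma>\<^sup>2 * Ss"
    using n by (intro add_mono mult_right_mono mult_left_mono order_refl)
      (auto simp: q_def E_def S_def sum_nonneg)
  also have "\<dots> = real N * (q * saga_lyapunov N g xs (6 * \<gamma>\<^sup>2) (x, t) + 3 * Ss / real N * \<gamma>\<^sup>2)"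
    using n by (simp add: saga_lyapunov_def E_def S_def field_simps)
  finally show ?thesis
    by (simp only: q_def Ss_def)
qed

lemma polynomial_step_decrement:
  assumes n: "n \<ge> 1" and \<alpha>: "\<alpha> \<le> 1" and c: "c \<ge> 0"
  shows "c / real n powr \<alpha> - c / real (Suc n) powr \<alpha> \<le> (c / real n powr \<alpha>) / real n"
proof -
  define \<rho> where "\<rho> = real n / real (Suc n)"
  have \<rho>: "0 < \<rho>" "\<rho> \<le> 1" using n by (auto simp: \<rho>_def)
  have "c / real (Suc n) powr \<alpha> = c / real n powr \<alpha> * \<rho> powr \<alpha>"
    using n by (simp add: \<rho>_def powr_divide del: of_nat_Suc)
  moreover have "\<rho> \<le> \<rho> powr \<alpha>"
    using powr_mono'[OF \<alpha>, of \<rho>] \<rho> by simp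
  moreover have "1 - \<rho> \<le> 1 / real n"
    using n by (simp add: \<rho>_def field_simps)
  ultimately have "c / real n powr \<alpha> - c / real (Suc n) powr \<alpha> \<le> c / real n powr \<alpha> * (1 - \<rho>)"
    using mult_left_mono[OF \<open>\<rho> \<le> \<rho> powr \<alpha>\<close>, of "c / real n powr \<alpha>"] c
    by (simp add: right_diff_distrib)
  also have "\<dots> \<le> c / real n powr \<alpha> * (1 / real n)"
    using c \<open>1 - \<rho> \<le> 1 / real n\<close> by (intro mult_left_mono) auto
  finally show ?thesis by simp
qed

lemma polynomial_step_tendsto_zero:
  assumes "\<alpha> > 0"
  shows "(\<lambda>n. c / real n powr \<alpha>) \<longlonglongrightarrow> 0"
proof -
  have "(\<lambda>n. c * real n powr (- \<alpha>)) \<longlonglongrightarrow> c * 0"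
    using assms by (intro tendsto_mult tendsto_const tendsto_neg_powr filterlim_real_sequentially) auto
  then show ?thesis
    by (simp add: powr_minus divide_inverse)
qed

text \<open>The condition 2c\<mu> > 1 for \<alpha> = 1 is exactly what keeps the decrement of the step size,
  of relative size n^(\<alpha>-1)/c times the step, below the contraction 2\<mu> times the step.\<close>
lemma polynomial_step_gap:
  assumes c: "c > 0" and \<alpha>: "0 < \<alpha>" "\<alpha> \<le> 1" and \<mu>: "\<mu> > 0"
    and critical: "\<alpha> = 1 \<Longrightarrow> 2 * c * \<mu> > 1" and r: "r < 1"
  defines "\<gamma> \<equiv> \<lambda>n. c / real n powr \<alpha>"
  shows "\<exists>\<kappa>>0. eventually (\<lambda>n. \<gamma> (Suc n) - max (1 - 2 * \<gamma> n * \<mu> + a * (\<gamma> n)\<^sup>2) r * \<gamma> n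
      \<ge> \<kappa> * (\<gamma> n)\<^sup>2) sequentially"
proof -
  define l where "l = (if \<alpha> = 1 then 1 / c else 0)"
  have l: "l < 2 * \<mu>" using critical c \<mu> by (auto simp: l_def field_simps)
  have \<gamma>0: "\<gamma> \<longlonglongrightarrow> 0"
    unfolding \<gamma>_def by (rule polynomial_step_tendsto_zero[OF \<alpha>(1)])
  have "(\<lambda>n. real n powr (\<alpha> - 1) / c) \<longlonglongrightarrow> l"
  proof (cases "\<alpha> = 1")
    case True
    have "\<forall>\<^sub>F n in sequentially. real n powr (\<alpha> - 1) / c = l"
      using eventually_gt_at_top[of "0::nat"] by eventually_elim (simp add: True l_def)
    then show ?thesis by (rule tendsto_eventually)
  next
    case False
    then have "(\<lambda>n. real n powr (\<alpha> - 1)) \<longlonglongrightarrow> 0"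
      using \<alpha> by (intro tendsto_neg_powr filterlim_real_sequentially) auto
    then show ?thesis
      using False tendsto_divide_zero by (auto simp: l_def)
  qed
  then have "(\<lambda>n. real n powr (\<alpha> - 1) / c + a * \<gamma> n) \<longlonglongrightarrow> l + a * 0"
    by (intro tendsto_intros \<gamma>0)
  then have "\<forall>\<^sub>F n in sequentially. real n powr (\<alpha> - 1) / c + a * \<gamma> n < (l + 2 * \<mu>) / 2"
    using l by (intro order_tendstoD) auto
  moreover have "(\<lambda>n. 2 * \<gamma> n * \<mu> - a * (\<gamma> n)\<^sup>2) \<longlonglongrightarrow> 2 * 0 * \<mu> - a * 0\<^sup>2"
    by (intro tendsto_intros \<gamma>0)
  then have "\<forall>\<^sub>F n in sequentially. 2 * \<gamma> n * \<mu> - a * (\<gamma> n)\<^sup>2 < 1 - r"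
    using r by (intro order_tendstoD) auto
  ultimately have "\<forall>\<^sub>F n in sequentially. \<gamma> (Suc n) - max (1 - 2 * \<gamma> n * \<mu> + a * (\<gamma> n)\<^sup>2) r * \<gamma> n
      \<ge> (2 * \<mu> - l) / 2 * (\<gamma> n)\<^sup>2"
    using eventually_ge_at_top[of 1]
  proof eventually_elim
    case (elim n)
    have n: "real n > 0" using elim by simp
    have "\<gamma> n / real n = (\<gamma> n)\<^sup>2 * (real n powr (\<alpha> - 1) / c)"
      using n c by (simp add: \<gamma>_def power2_eq_square powr_diff field_simps)
    moreover have "\<gamma> n - \<gamma> (Suc n) \<le> \<gamma> n / real n"
      unfolding \<gamma>_def using elim c \<alpha> by (intro polynomial_step_decrement) auto
    ultimately have "\<gamma> (Suc n) - (1 - 2 * \<gamma> n * \<mu> + a * (\<gamma> n)\<^sup>2) * \<gamma> n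
        \<ge> (\<gamma> n)\<^sup>2 * (2 * \<mu> - (real n powr (\<alpha> - 1) / c + a * \<gamma> n))"
      by (simp add: algebra_simps power2_eq_square)
    moreover have "(2 * \<mu> - l) / 2 * (\<gamma> n)\<^sup>2 \<le> (\<gamma> n)\<^sup>2 * (2 * \<mu> - (real n powr (\<alpha> - 1) / c + a * \<gamma> n))"
      using mult_left_mono[of "(2 * \<mu> - l) / 2" "2 * \<mu> - (real n powr (\<alpha> - 1) / c + a * \<gamma> n)" "(\<gamma> n)\<^sup>2"] elim(1)
      by (simp add: mult.commute)
    ultimately have "(2 * \<mu> - l) / 2 * (\<gamma> n)\<^sup>2 \<le> \<gamma> (Suc n) - (1 - 2 * \<gamma> n * \<mu> + a * (\<gamma> n)\<^sup>2) * \<gamma> n"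
      by (rule order_trans[rotated])
    moreover have "max (1 - 2 * \<gamma> n * \<mu> + a * (\<gamma> n)\<^sup>2) r = 1 - 2 * \<gamma> n * \<mu> + a * (\<gamma> n)\<^sup>2"
      using elim(2) by simp
    ultimately show ?case
      by simp
  qed
  then show ?thesis
    using l by (intro exI[of _ "(2 * \<mu> - l) / 2"]) auto
qed

lemma chung_bound:
  fixes v \<gamma> q :: "nat \<Rightarrow> real"
  assumes \<gamma>: "\<And>n. n \<ge> 1 \<Longrightarrow> \<gamma> n > 0" and q: "\<And>n. q n \<ge> 0"
    and S: "S \<ge> 0" and \<kappa>: "\<kappa> > 0"
    and rec: "\<And>n. n \<ge> 1 \<Longrightarrow> v (Suc n) \<le> q n * v n + S * (\<gamma> n)\<^sup>2"
    and gap: "eventually (\<lambda>n. \<gamma> (Suc n) - q n * \<gamma> n \<ge> \<kappa> * (\<gamma> n)\<^sup>2) sequentially"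
  shows "\<exists>K>0. \<forall>n\<ge>1. v n \<le> K * \<gamma> n"
proof -
  obtain n1 where n1: "\<And>n. n \<ge> n1 \<Longrightarrow> \<gamma> (Suc n) - q n * \<gamma> n \<ge> \<kappa> * (\<gamma> n)\<^sup>2"
    using gap by (auto simp: eventually_sequentially)
  define K where "K = max (S / \<kappa>) (Max ((\<lambda>n. v n / \<gamma> n) ` {1..Suc n1}))"
  have SK: "S / \<kappa> \<le> K"
    by (simp add: K_def)
  have K: "K \<ge> 0" "S \<le> K * \<kappa>"
    using order_trans[OF divide_nonneg_pos[OF S \<kappa>] SK] SK \<kappa> by (simp_all add: pos_divide_le_eq)
  have "v n \<le> K * \<gamma> n" if "n \<ge> 1" for n
    using that
  proof (induction n rule: dec_induct)
    case base
    have "v 1 / \<gamma> 1 \<le> K"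
      unfolding K_def by (rule max.coboundedI2) auto
    then show ?case using \<gamma>[of 1] by (simp add: divide_le_eq)
  next
    case (step n)
    show ?case
    proof (cases "Suc n \<le> n1")
      case True
      then have "v (Suc n) / \<gamma> (Suc n) \<le> K"
        unfolding K_def by (intro max.coboundedI2 Max_ge) auto
      then show ?thesis using \<gamma>[of "Suc n"] by (simp add: divide_le_eq)
    next
      case False
      have "v (Suc n) \<le> q n * (K * \<gamma> n) + K * \<kappa> * (\<gamma> n)\<^sup>2"
        using rec[OF step.hyps(1)] mult_left_mono[OF step.IH q[of n]]
          mult_right_mono[OF K(2) zero_le_power2[of "\<gamma> n"]]
        by linarith
      also have "\<dots> = K * (q n * \<gamma> n + \<kappa> * (\<gamma> n)\<^sup>2)"
        by (simp add: algebra_simps)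
      also have "\<dots> \<le> K * \<gamma> (Suc n)"
        using n1[of n] False K(1) by (intro mult_left_mono) auto
      finally show ?thesis .
    qed
  qed
  then show ?thesis
  proof (intro exI[of _ "K + 1"] conjI allI impI)
    fix n :: nat
    assume "n \<ge> 1"
    with \<open>\<And>n. n \<ge> 1 \<Longrightarrow> v n \<le> K * \<gamma> n\<close> \<gamma> show "v n \<le> (K + 1) * \<gamma> n"
      by (simp add: distrib_right add_increasing2 less_imp_le)
  qed (use K(1) in simp)
qed

lemma chung_bound_ennreal:
  fixes w :: "nat \<Rightarrow> ennreal" and \<gamma> q :: "nat \<Rightarrow> real"
  assumes \<gamma>: "\<And>n. n \<ge> 1 \<Longrightarrow> \<gamma> n > 0" and q: "\<And>n. q n \<ge> 0"
    and S: "S \<ge> 0" and \<kappa>: "\<kappa> > 0" and w1: "w 1 < \<infinity>"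
    and rec: "\<And>n. n \<ge> 1 \<Longrightarrow> w (Suc n) \<le> ennreal (q n) * w n + ennreal (S * (\<gamma> n)\<^sup>2)"
    and gap: "eventually (\<lambda>n. \<gamma> (Suc n) - q n * \<gamma> n \<ge> \<kappa> * (\<gamma> n)\<^sup>2) sequentially"
  shows "\<exists>K>0. \<forall>n\<ge>1. w n \<le> ennreal (K * \<gamma> n)"
proof -
  have finite: "w n < \<infinity>" if "n \<ge> 1" for n
    using that
  proof (induction n rule: dec_induct)
    case (step n)
    then have "ennreal (q n) * w n + ennreal (S * (\<gamma> n)\<^sup>2) < \<infinity>"
      by (simp add: ennreal_mult_less_top)
    then show ?case
      by (rule le_less_trans[OF rec[OF step.hyps(1)]])
  qed (use w1 in simp)
  define v where "v n = enn2real (w n)" for n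
  have v: "v n \<ge> 0" for n
    by (simp add: v_def)
  have w: "w n = ennreal (v n)" if "n \<ge> 1" for n
    using finite[OF that] by (simp add: v_def ennreal_enn2real_if less_top)
  have "v (Suc n) \<le> q n * v n + S * (\<gamma> n)\<^sup>2" if "n \<ge> 1" for n
  proof -
    have "ennreal (v (Suc n)) \<le> ennreal (q n) * ennreal (v n) + ennreal (S * (\<gamma> n)\<^sup>2)"
      using rec[OF that] that by (simp only: w[OF that] w[of "Suc n"] le_SucI)
    also have "\<dots> = ennreal (q n * v n + S * (\<gamma> n)\<^sup>2)"
      using q[of n] v[of n] S by (simp only: ennreal_mult ennreal_plus mult_nonneg_nonneg zero_le_power2)
    finally show ?thesis
      using q[of n] v[of n] S by (subst (asm) ennreal_le_iff) auto
  qed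
  then obtain K where "K > 0" "\<forall>n\<ge>1. v n \<le> K * \<gamma> n"
    using chung_bound[OF \<gamma> q S \<kappa> _ gap] by blast
  then show ?thesis
    using w by (intro exI[of _ K]) (auto intro: ennreal_leI)
qed

lemma gradient_borel_measurable:
  fixes f :: "'a::euclidean_space \<Rightarrow> real"
  assumes grad: "\<And>x. (f has_derivative (\<lambda>h. G x \<bullet> h)) (at x)"
  shows "G \<in> borel_measurable borel"
proof -
  have [measurable]: "f \<in> borel_measurable borel"
    using grad has_derivative_continuous continuous_at_imp_continuous_on
    by (blast intro: borel_measurable_continuous_onI)
  have "(\<lambda>x. G x \<bullet> b) \<in> borel_measurable borel" for b
  proof (rule borel_measurable_LIMSEQ_real)
    fix x
    have "((\<lambda>t. x + t *\<^sub>R b) has_derivative (\<lambda>t. t *\<^sub>R b)) (at 0)"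
      by (auto intro!: derivative_eq_intros)
    moreover have "(f has_derivative (\<lambda>h. G x \<bullet> h)) (at (x + 0 *\<^sub>R b))"
      using grad by simp
    ultimately have "((\<lambda>t. f (x + t *\<^sub>R b)) has_derivative (\<lambda>t. G x \<bullet> (t *\<^sub>R b))) (at 0)"
      by (rule has_derivative_compose)
    then have "((\<lambda>t. f (x + t *\<^sub>R b)) has_real_derivative (G x \<bullet> b)) (at 0)"
      by (rule has_derivative_imp_has_field_derivative) simp
    then have "((\<lambda>t. (f (x + t *\<^sub>R b) - f x) / t) \<longlongrightarrow> G x \<bullet> b) (at 0)"
      by (simp add: DERIV_def)
    moreover have "filterlim (\<lambda>i. 1 / real (Suc i)) (at 0) sequentially"
      using LIMSEQ_inverse_real_of_nat by (simp add: filterlim_at inverse_eq_divide)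
    ultimately show "(\<lambda>i. real (Suc i) * (f (x + (1 / real (Suc i)) *\<^sub>R b) - f x)) \<longlonglongrightarrow> G x \<bullet> b"
      by (auto dest: filterlim_compose simp: o_def field_simps)
  qed measurable
  then have "(\<lambda>x. \<Sum>b\<in>Basis. (G x \<bullet> b) *\<^sub>R b) \<in> borel_measurable borel"
    by measurable
  then show ?thesis
    by (simp add: euclidean_representation)
qed

lemma (in prob_space) nn_integral_indep_uniform:
  assumes indep: "indep_var S Y T V"
    and \<phi>[measurable]: "\<phi> \<in> measurable T (count_space UNIV)"
    and unif: "distr M (count_space UNIV) (\<lambda>\<omega>. \<phi> (V \<omega>)) = measure_pmf (pmf_of_set K)"
    and K: "finite K" "K \<noteq> {}"
    and h[measurable]: "h \<in> borel_measurable (S \<Otimes>\<^sub>M count_space UNIV)"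
  shows "(\<integral>\<^sup>+\<omega>. h (Y \<omega>, \<phi> (V \<omega>)) \<partial>M) = (\<integral>\<^sup>+\<omega>. (\<Sum>k\<in>K. h (Y \<omega>, k)) / of_nat (card K) \<partial>M)"
proof -
  have [measurable]: "Y \<in> measurable M S" "V \<in> measurable M T"
    using indep_var_rv1[OF indep] indep_var_rv2[OF indep] .
  interpret V: prob_space "distr M T V"
    by (rule prob_space_distr) simp
  have "(\<integral>\<^sup>+\<omega>. h (Y \<omega>, \<phi> (V \<omega>)) \<partial>M)
      = (\<integral>\<^sup>+z. h (fst z, \<phi> (snd z)) \<partial>distr M (S \<Otimes>\<^sub>M T) (\<lambda>\<omega>. (Y \<omega>, V \<omega>)))"
    by (subst nn_integral_distr) auto
  also have "\<dots> = (\<integral>\<^sup>+z. h (fst z, \<phi> (snd z)) \<partial>(distr M S Y \<Otimes>\<^sub>M distr M T V))"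
    using indep by (simp add: indep_var_distribution_eq)
  also have "\<dots> = (\<integral>\<^sup>+y. \<integral>\<^sup>+v. h (y, \<phi> v) \<partial>distr M T V \<partial>distr M S Y)"
    by (subst V.nn_integral_fst[symmetric])
      (auto simp: measurable_def space_pair_measure sets_pair_measure_cong[OF sets_distr sets_distr])
  also have "\<dots> = (\<integral>\<^sup>+y. (\<Sum>k\<in>K. h (y, k)) / of_nat (card K) \<partial>distr M S Y)"
  proof (rule nn_integral_cong)
    fix y
    have [measurable]: "(\<lambda>v. h (y, \<phi> v)) \<in> borel_measurable T"
      using measurable_compose[OF \<phi>, of "\<lambda>k. h (y, k)" borel] by simp
    have "(\<integral>\<^sup>+v. h (y, \<phi> v) \<partial>distr M T V) = (\<integral>\<^sup>+\<omega>. h (y, \<phi> (V \<omega>)) \<partial>M)"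
      by (subst nn_integral_distr) auto
    also have "\<dots> = (\<integral>\<^sup>+k. h (y, k) \<partial>distr M (count_space UNIV) (\<lambda>\<omega>. \<phi> (V \<omega>)))"
      by (subst nn_integral_distr) auto
    finally have "(\<integral>\<^sup>+v. h (y, \<phi> v) \<partial>distr M T V) = (\<integral>\<^sup>+k. h (y, k) \<partial>distr M (count_space UNIV) (\<lambda>\<omega>. \<phi> (V \<omega>)))" .
    then show "(\<integral>\<^sup>+v. h (y, \<phi> v) \<partial>distr M T V) = (\<Sum>k\<in>K. h (y, k)) / of_nat (card K)"
      using K by (simp add: unif nn_integral_pmf_of_set)
  qed
  also have "\<dots> = (\<integral>\<^sup>+\<omega>. (\<Sum>k\<in>K. h (Y \<omega>, k)) / of_nat (card K) \<partial>M)"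
    by (subst nn_integral_distr) auto
  finally show ?thesis .
qed

lemma sum_ennreal_divide_card_le:
  assumes K: "finite K" "K \<noteq> {}" and F: "\<And>k. k \<in> K \<Longrightarrow> F k \<ge> 0"
    and le: "(\<Sum>k\<in>K. F k) \<le> real (card K) * B"
  shows "(\<Sum>k\<in>K. ennreal (F k)) / of_nat (card K) \<le> ennreal B"
proof -
  have card: "real (card K) > 0" using K by (simp add: card_gt_0_iff)
  have "(\<Sum>k\<in>K. ennreal (F k)) / of_nat (card K) = ennreal ((\<Sum>k\<in>K. F k) / real (card K))"
    using F card by (simp add: sum_ennreal ennreal_of_nat_eq_real_of_nat divide_ennreal sum_nonneg)
  also have "\<dots> \<le> ennreal B"
    using le card by (intro ennreal_leI) (simp add: divide_le_eq mult.commute)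
  finally show ?thesis .
qed

lemma (in prob_space) indep_sets_insert:
  assumes indep: "indep_sets F I"
    and new: "indep_set A (sigma_sets (space M) (\<Union>i\<in>I. F i))"
    and i0: "i0 \<notin> I"
  shows "indep_sets (F(i0 := A)) (insert i0 I)"
proof (rule indep_setsI)
  fix i assume "i \<in> insert i0 I"
  then show "(F(i0 := A)) i \<subseteq> events"
    using indep_setD_ev1[OF new] indep_sets_mono_sets[OF indep] by (auto simp: indep_sets_def)
next
  fix B J assume J: "J \<noteq> {}" "J \<subseteq> insert i0 I" "finite J"
    and B: "\<forall>j\<in>J. B j \<in> (F(i0 := A)) j"
  have BF: "B j \<in> F j" if "j \<in> J - {i0}" for j
    using B that by (metis DiffE fun_upd_other singletonI)
  have old: "prob (\<Inter>j\<in>J'. B j) = (\<Prod>j\<in>J'. prob (B j))" if J': "J' \<subseteq> J - {i0}" "J' \<noteq> {}" for J'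
    using J' J BF by (intro indep_setsD[OF indep]) (auto intro: finite_subset)
  show "prob (\<Inter>j\<in>J. B j) = (\<Prod>j\<in>J. prob (B j))"
  proof (cases "i0 \<in> J \<and> J - {i0} \<noteq> {}")
    case True
    let ?G = "sigma_sets (space M) (\<Union>i\<in>I. F i)"
    interpret G: sigma_algebra "space M" ?G
      using indep_setD_ev2[OF new] by (auto intro: sigma_algebra_sigma_sets dest: sets.sets_into_space
          simp: indep_sets_def)
    have "(\<Inter>j\<in>J - {i0}. B j) \<in> ?G"
      using True J BF by (intro G.finite_INT) (auto intro: sigma_sets.Basic)
    moreover have "B i0 \<in> A"
      using bspec[OF B, of i0] True by simp
    moreover have "(\<Inter>j\<in>J. B j) = B i0 \<inter> (\<Inter>j\<in>J - {i0}. B j)"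
      using True by auto
    ultimately have "prob (\<Inter>j\<in>J. B j) = prob (B i0) * prob (\<Inter>j\<in>J - {i0}. B j)"
      using indep_setD[OF new] by simp
    also have "\<dots> = (\<Prod>j\<in>J. prob (B j))"
      using True old[of "J - {i0}"] prod.remove[OF J(3), of i0 "\<lambda>j. prob (B j)"] by simp
    finally show ?thesis .
  next
    case False
    then consider "J = {i0}" | "i0 \<notin> J"
      using J(1) by blast
    then show ?thesis
      using old[of J] J(1) by cases auto
  qed
qed

lemma (in prob_space) indep_vars_insert_pair:
  assumes indep: "indep_vars (\<lambda>_. MU) U I"
    and X: "X \<in> measurable M MX"
    and new: "indep_set {X -` A \<inter> space M | A. A \<in> sets MX}
      (sigma_sets (space M) (\<Union>i\<in>I. {U i -` A \<inter> space M | A. A \<in> sets MU}))"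
    and i0: "i0 \<notin> I" and x0: "x0 \<in> space MX" and u0: "u0 \<in> space MU"
  shows "indep_vars (\<lambda>_. MX \<Otimes>\<^sub>M MU) (\<lambda>i \<omega>. if i = i0 then (X \<omega>, u0) else (x0, U i \<omega>)) (insert i0 I)"
  unfolding indep_vars_def2
proof (intro conjI ballI)
  have U: "U i \<in> measurable M MU" if "i \<in> I" for i
    using indep that by (simp add: indep_vars_def2)
  show "random_variable (MX \<Otimes>\<^sub>M MU) (\<lambda>\<omega>. if i = i0 then (X \<omega>, u0) else (x0, U i \<omega>))"
    if "i \<in> insert i0 I" for i
    using that X U u0 x0 by (cases "i = i0") auto
  let ?F = "\<lambda>i. {U i -` A \<inter> space M | A. A \<in> sets MU}"
  have sub: "(\<lambda>\<omega>. if i = i0 then (X \<omega>, u0) else (x0, U i \<omega>)) -` A \<inter> space M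
      \<in> (?F(i0 := {X -` A \<inter> space M | A. A \<in> sets MX})) i"
    if "i \<in> insert i0 I" "A \<in> sets (MX \<Otimes>\<^sub>M MU)" for i A
  proof (cases "i = i0")
    case True
    have "(\<lambda>x. (x, u0)) -` A \<inter> space MX \<in> sets MX"
      using u0 that(2) by (intro measurable_sets[of _ MX "MX \<Otimes>\<^sub>M MU"]) auto
    moreover have "(\<lambda>\<omega>. if i = i0 then (X \<omega>, u0) else (x0, U i \<omega>)) -` A \<inter> space M
        = X -` ((\<lambda>x. (x, u0)) -` A \<inter> space MX) \<inter> space M"
      using True measurable_space[OF X] by auto
    ultimately show ?thesis
      unfolding True fun_upd_same by blast
  next
    case False
    have "(\<lambda>u. (x0, u)) -` A \<inter> space MU \<in> sets MU"
      using x0 that(2) by (intro measurable_sets[of _ MU "MX \<Otimes>\<^sub>M MU"]) auto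
    moreover have "(\<lambda>\<omega>. if i = i0 then (X \<omega>, u0) else (x0, U i \<omega>)) -` A \<inter> space M
        = U i -` ((\<lambda>u. (x0, u)) -` A \<inter> space MU) \<inter> space M"
      using False that(1) measurable_space[OF U] by auto
    ultimately show ?thesis
      unfolding fun_upd_other[OF False] by blast
  qed
  have "indep_sets (?F(i0 := {X -` A \<inter> space M | A. A \<in> sets MX})) (insert i0 I)"
    using indep new i0 by (intro indep_sets_insert) (auto simp: indep_vars_def2)
  then show "indep_sets (\<lambda>i. {(\<lambda>\<omega>. if i = i0 then (X \<omega>, u0) else (x0, U i \<omega>)) -` A \<inter> space M | A.
      A \<in> sets (MX \<Otimes>\<^sub>M MU)}) (insert i0 I)"
    by (rule indep_sets_mono_sets) (use sub in blast)
qed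

locale saga_setting = prob_space M
  for M :: "'s measure" and N :: nat and g :: "nat \<Rightarrow> 'a::euclidean_space \<Rightarrow> 'a"
    and lam c \<alpha> L \<mu> :: real and xstar :: 'a and X0 X1 :: "'s \<Rightarrow> 'a" and U :: "nat \<Rightarrow> 's \<Rightarrow> nat" +
  assumes N: "N \<ge> 1"
    and g_measurable: "\<And>k. k \<in> {1..N} \<Longrightarrow> g k \<in> borel_measurable borel"
    and lam: "0 \<le> lam" "lam \<le> 1"
    and c: "c > 0"
    and alpha: "0 < \<alpha>" "\<alpha> \<le> 1"
    and X0: "X0 \<in> borel_measurable M" "integrable M (\<lambda>\<omega>. (norm (X0 \<omega>))\<^sup>2)"
    and X1: "X1 \<in> borel_measurable M" "integrable M (\<lambda>\<omega>. (norm (X1 \<omega>))\<^sup>2)"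
    and U_meas: "\<And>j. j \<ge> 2 \<Longrightarrow> U j \<in> measurable M (count_space UNIV)"
    and U_unif: "\<And>j. j \<ge> 2 \<Longrightarrow> distr M (count_space UNIV) (U j) = measure_pmf (pmf_of_set {1..N})"
    and U_indep: "indep_vars (\<lambda>_. count_space UNIV) U {2..}"
    and X_U_indep: "indep_set {(\<lambda>\<omega>. (X0 \<omega>, X1 \<omega>)) -` A \<inter> space M | A. A \<in> sets borel}
        (sigma_sets (space M) (\<Union>j\<in>{2..}. {U j -` A \<inter> space M | A. A \<in> sets (count_space UNIV)}))"
    and zero: "(1 / real N) *\<^sub>R (\<Sum>k\<in>{1..N}. g k xstar) = 0"
    and lip: "L \<ge> 0" "\<And>x. (1 / real N) * (\<Sum>k\<in>{1..N}. (norm (g k x - g k xstar))\<^sup>2)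
        \<le> L * (norm (x - xstar))\<^sup>2"
    and strong: "\<mu> > 0" "\<And>x. (x - xstar) \<bullet> ((1 / real N) *\<^sub>R (\<Sum>k\<in>{1..N}. g k x))
        \<ge> \<mu> * (norm (x - xstar))\<^sup>2"
    and critical: "\<alpha> = 1 \<Longrightarrow> 2 * c * \<mu> > 1"
begin

definition stepsize :: "nat \<Rightarrow> real" where
  "stepsize n = c / real n powr \<alpha>"

definition clamp :: "nat \<Rightarrow> nat" where
  "clamp k = (if k \<in> {1..N} then k else 1)"

text \<open>The sampled indices, forced into {1..N} outside the null set where some U j leaves it, so that
  the iterates are measurable no matter how g behaves at indices outside {1..N}.\<close>
definition index :: "nat \<Rightarrow> 's \<Rightarrow> nat" where
  "index j \<omega> = (if 2 \<le> j then clamp (U j \<omega>) else 1)"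

definition state :: "nat \<Rightarrow> 's \<Rightarrow> 'a \<times> (nat \<Rightarrow> 'a)" where
  "state m \<omega> = saga_st N g lam stepsize (X0 \<omega>) (X1 \<omega>) (\<lambda>j. index j \<omega>) m"

definition lyapunov :: "nat \<Rightarrow> 'a \<times> (nat \<Rightarrow> 'a) \<Rightarrow> real" where
  "lyapunov n = saga_lyapunov N g xstar (6 * (stepsize n)\<^sup>2)"

definition mean_lyapunov :: "nat \<Rightarrow> ennreal" where
  "mean_lyapunov n = (\<integral>\<^sup>+\<omega>. ennreal (lyapunov n (state (n - 1) \<omega>)) \<partial>M)"

lemma mean_lyapunov_Suc: "mean_lyapunov (Suc m) = (\<integral>\<^sup>+\<omega>. ennreal (lyapunov (Suc m) (state m \<omega>)) \<partial>M)"
  by (simp add: mean_lyapunov_def)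

definition contraction :: "nat \<Rightarrow> real" where
  "contraction n = max (1 - 2 * stepsize n * \<mu> + 9 * L * (stepsize n)\<^sup>2) (1 - 1 / (2 * real N))"

definition noise :: real where
  "noise = 3 * (\<Sum>j\<in>{1..N}. (norm (g j xstar))\<^sup>2) / real N"

lemma lyapunov_nonneg: "lyapunov n st \<ge> 0"
  by (simp add: lyapunov_def saga_lyapunov_nonneg)

lemma stepsize_pos: "n \<ge> 1 \<Longrightarrow> stepsize n > 0"
  using c by (simp add: stepsize_def)

lemma stepsize_decreasing: "n \<ge> 1 \<Longrightarrow> stepsize (Suc n) \<le> stepsize n"
  using c alpha by (auto simp: stepsize_def intro!: divide_left_mono powr_mono2 simp del: of_nat_Suc)

lemma noise_nonneg: "noise \<ge> 0"
  by (simp add: noise_def sum_nonneg)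

lemma contraction_nonneg: "contraction n \<ge> 0"
  using N by (auto simp: contraction_def field_simps intro: max.coboundedI2)

lemma zero_sum: "(\<Sum>k\<in>{1..N}. g k xstar) = 0"
  using zero N by simp

lemma lip_sum: "(\<Sum>k\<in>{1..N}. (norm (g k x - g k xstar))\<^sup>2) \<le> real N * L * (norm (x - xstar))\<^sup>2"
  using lip(2)[of x] N by (simp add: field_simps)

lemma strong_sum: "real N * \<mu> * (norm (x - xstar))\<^sup>2 \<le> (x - xstar) \<bullet> (\<Sum>k\<in>{1..N}. g k x)"
  using strong(2)[of x] N by (simp add: field_simps)

lemma index_measurable: "index j \<in> measurable M (count_space UNIV)"
proof (cases "2 \<le> j")
  case True
  then show ?thesis
    using measurable_compose[OF U_meas[OF True] measurable_count_space, of clamp]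
    by (simp add: index_def[abs_def])
qed (simp add: index_def[abs_def])

lemma lyapunov_state_measurable: "(\<lambda>\<omega>. lyapunov n (state m \<omega>)) \<in> borel_measurable M"
  unfolding lyapunov_def state_def
  using N by (intro saga_lyapunov_saga_st_measurable g_measurable X0(1) X1(1) index_measurable)
    (auto simp: index_def clamp_def)

lemma AE_saga_X_eq_state:
  "AE \<omega> in M. \<forall>m. saga_X N g lam stepsize (X0 \<omega>) (X1 \<omega>) (\<lambda>j. U j \<omega>) (Suc m) = fst (state m \<omega>)"
proof -
  have "AE \<omega> in M. U j \<omega> \<in> {1..N}" if "j \<ge> 2" for j
  proof -
    have "AE k in distr M (count_space UNIV) (U j). k \<in> {1..N}"
      unfolding U_unif[OF that] using N by (simp add: AE_measure_pmf_iff)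
    then show ?thesis
      by (subst (asm) AE_distr_iff) (auto intro: U_meas[OF that])
  qed
  then have "AE \<omega> in M. \<forall>j. 2 \<le> j \<longrightarrow> U j \<omega> \<in> {1..N}"
    by (auto simp: AE_all_countable)
  then show ?thesis
    by eventually_elim (auto simp: state_def index_def clamp_def intro!: arg_cong[where f = fst] saga_st_cong)
qed

lemma mean_lyapunov_1_finite: "mean_lyapunov 1 < \<infinity>"
proof -
  have sq: "(norm (a - b))\<^sup>2 \<le> 3 * (norm a)\<^sup>2 + 3 * (norm b)\<^sup>2" for a b :: 'a
    using norm_add3_power2_le[of a "- b" 0] by simp
  define B where "B \<omega> = 3 * (norm (X1 \<omega>))\<^sup>2 + 3 * (norm xstar)\<^sup>2
      + 6 * (stepsize 1)\<^sup>2 * (real N * L * (3 * (norm (X0 \<omega>))\<^sup>2 + 3 * (norm xstar)\<^sup>2))" for \<omega>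
  have "lyapunov 1 (state 0 \<omega>) \<le> B \<omega>" for \<omega>
  proof -
    have eq: "lyapunov 1 (state 0 \<omega>) = (norm (X1 \<omega> - xstar))\<^sup>2
        + 6 * (stepsize 1)\<^sup>2 * (\<Sum>j\<in>{1..N}. (norm (g j (X0 \<omega>) - g j xstar))\<^sup>2)"
      by (simp add: lyapunov_def saga_lyapunov_def state_def)
    have "(\<Sum>j\<in>{1..N}. (norm (g j (X0 \<omega>) - g j xstar))\<^sup>2)
        \<le> real N * L * (3 * (norm (X0 \<omega>))\<^sup>2 + 3 * (norm xstar)\<^sup>2)"
      using order_trans[OF lip_sum mult_left_mono[OF sq]] lip(1) by simp
    then show ?thesis
      unfolding eq B_def using sq[of "X1 \<omega>" xstar] by (intro add_mono mult_left_mono) auto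
  qed
  then have "mean_lyapunov 1 \<le> (\<integral>\<^sup>+\<omega>. ennreal (B \<omega>) \<partial>M)"
    by (auto simp: mean_lyapunov_def intro!: nn_integral_mono ennreal_leI)
  also have "\<dots> = ennreal (integral\<^sup>L M B)"
  proof (rule nn_integral_eq_integral)
    show "integrable M B"
      unfolding B_def using X0(2) X1(2) by auto
    show "AE \<omega> in M. 0 \<le> B \<omega>"
      using lip(1) N by (auto simp: B_def)
  qed
  finally show ?thesis
    by (simp add: le_less_trans)
qed

text \<open>The information available before the index U (m + 2) is drawn: the initial points and
  U 2, ..., U (m + 1), packed into one family with a common codomain.\<close>
definition history :: "nat \<Rightarrow> 's \<Rightarrow> nat \<Rightarrow> ('a \<times> 'a) \<times> nat" where
  "history m \<omega> = restrict (\<lambda>i. if i = 0 then ((X0 \<omega>, X1 \<omega>), 0) else ((0, 0), U i \<omega>)) (insert 0 {2..Suc m})"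

definition history_space :: "nat \<Rightarrow> (nat \<Rightarrow> ('a \<times> 'a) \<times> nat) measure" where
  "history_space m = PiM (insert 0 {2..Suc m}) (\<lambda>_. borel \<Otimes>\<^sub>M count_space UNIV)"

definition history_index :: "nat \<Rightarrow> (nat \<Rightarrow> ('a \<times> 'a) \<times> nat) \<Rightarrow> nat \<Rightarrow> nat \<Rightarrow> nat" where
  "history_index m p k j =
     (if j = Suc (Suc m) then clamp k else if 2 \<le> j \<and> j \<le> Suc m then clamp (snd (p j)) else 1)"

definition history_state :: "nat \<Rightarrow> (nat \<Rightarrow> ('a \<times> 'a) \<times> nat) \<Rightarrow> nat \<Rightarrow> 'a \<times> (nat \<Rightarrow> 'a)" where
  "history_state m p k =
     saga_st N g lam stepsize (fst (fst (p 0))) (snd (fst (p 0))) (history_index m p k) (Suc m)"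

lemma indep_history_next_index:
  "indep_var (history_space m) (history m)
     (PiM {Suc (Suc m)} (\<lambda>_. borel \<Otimes>\<^sub>M count_space UNIV))
     (\<lambda>\<omega>. restrict (\<lambda>_. ((0, 0), U (Suc (Suc m)) \<omega>)) {Suc (Suc m)})"
proof -
  define Z where "Z i \<omega> = (if i = 0 then ((X0 \<omega>, X1 \<omega>), 0) else ((0, 0), U i \<omega>))" for i \<omega>
  have "(\<lambda>\<omega>. (X0 \<omega>, X1 \<omega>)) \<in> borel_measurable M"
    using X0(1) X1(1) by measurable
  then have "indep_vars (\<lambda>_. borel \<Otimes>\<^sub>M count_space UNIV) Z (insert 0 {2..})"
    unfolding Z_def using U_indep X_U_indep by (intro indep_vars_insert_pair) auto
  then have "indep_var (history_space m) (\<lambda>\<omega>. restrict (\<lambda>i. Z i \<omega>) (insert 0 {2..Suc m}))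
      (PiM {Suc (Suc m)} (\<lambda>_. borel \<Otimes>\<^sub>M count_space UNIV)) (\<lambda>\<omega>. restrict (\<lambda>i. Z i \<omega>) {Suc (Suc m)})"
    unfolding history_space_def by (rule indep_var_restrict) auto
  moreover have "(\<lambda>\<omega>. restrict (\<lambda>i. Z i \<omega>) {Suc (Suc m)})
      = (\<lambda>\<omega>. restrict (\<lambda>_. ((0, 0), U (Suc (Suc m)) \<omega>)) {Suc (Suc m)})"
    by (auto simp: Z_def fun_eq_iff)
  ultimately show ?thesis
    by (simp add: Z_def history_def[abs_def])
qed

lemma history_initial: "fst (fst (history m \<omega> 0)) = X0 \<omega>" "snd (fst (history m \<omega> 0)) = X1 \<omega>"
  by (simp_all add: history_def)

lemma history_state_history:
  "history_state m (history m \<omega>) (U (Suc (Suc m)) \<omega>) = state (Suc m) \<omega>"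
  unfolding history_state_def state_def history_initial
  by (rule saga_st_cong) (auto simp: history_def history_index_def index_def)

lemma history_state_history_index:
  assumes "k \<in> {1..N}"
  shows "history_state m (history m \<omega>) k = saga_step N g lam (stepsize (Suc m)) (state m \<omega>) k"
proof -
  have "saga_st N g lam stepsize (X0 \<omega>) (X1 \<omega>) (history_index m (history m \<omega>) k) m = state m \<omega>"
    unfolding state_def by (rule saga_st_cong) (auto simp: history_def history_index_def index_def)
  moreover have "history_index m (history m \<omega>) k (Suc (Suc m)) = k"
    using assms by (simp add: history_index_def clamp_def)
  ultimately show ?thesis
    unfolding history_state_def history_initial saga_st_Suc_step by (simp only:)
qed

lemma history_component_measurable:
  assumes "j \<in> insert 0 {2..Suc m}"
  shows "(\<lambda>z. fst z j) \<in> measurable (history_space m \<Otimes>\<^sub>M count_space UNIV) (borel \<Otimes>\<^sub>M count_space UNIV)"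
  using assms unfolding history_space_def
  by (intro measurable_compose[OF measurable_fst measurable_component_singleton])

lemma history_index_measurable:
  "(\<lambda>z. history_index m (fst z) (snd z) j) \<in> measurable (history_space m \<Otimes>\<^sub>M count_space UNIV) (count_space UNIV)"
proof -
  consider "j = Suc (Suc m)" | "j \<noteq> Suc (Suc m)" "j \<in> {2..Suc m}" | "j \<noteq> Suc (Suc m)" "j \<notin> {2..Suc m}"
    by blast
  then show ?thesis
  proof cases
    case 1
    then show ?thesis
      using measurable_compose[OF measurable_snd measurable_count_space, of clamp]
      by (simp add: history_index_def)
  next
    case 2
    then have "(\<lambda>z. snd (fst z j)) \<in> measurable (history_space m \<Otimes>\<^sub>M count_space UNIV) (count_space UNIV)"
      using measurable_compose[OF history_component_measurable[where j = j and m = m] measurable_snd] by simp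
    from measurable_compose[OF this measurable_count_space, of clamp] 2 show ?thesis
      by (simp add: history_index_def)
  next
    case 3
    then have "(\<lambda>z. history_index m (fst z) (snd z) j) = (\<lambda>z. 1)"
      by (auto simp: history_index_def)
    then show ?thesis
      by simp
  qed
qed

lemma lyapunov_history_state_measurable:
  "(\<lambda>z. lyapunov n (history_state m (fst z) (snd z)))
     \<in> borel_measurable (history_space m \<Otimes>\<^sub>M count_space UNIV)"
proof -
  let ?S = "history_space m \<Otimes>\<^sub>M count_space UNIV"
  have initial: "(\<lambda>z. fst (fst z 0)) \<in> measurable ?S borel"
    using measurable_compose[OF history_component_measurable[where j = 0 and m = m] measurable_fst] by simp
  have "(fst :: 'a \<times> 'a \<Rightarrow> 'a) \<in> borel_measurable borel" "(snd :: 'a \<times> 'a \<Rightarrow> 'a) \<in> borel_measurable borel"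
    by (intro borel_measurable_continuous_onI continuous_on_fst continuous_on_snd continuous_on_id)+
  from measurable_compose[OF initial this(1)] measurable_compose[OF initial this(2)]
  have x0: "(\<lambda>z. fst (fst (fst z 0))) \<in> borel_measurable ?S"
    and x1: "(\<lambda>z. snd (fst (fst z 0))) \<in> borel_measurable ?S" .
  have range: "history_index m (fst z) (snd z) j \<in> {1..N}" if "z \<in> space ?S" for z j
    using N by (simp add: history_index_def clamp_def)
  show ?thesis
    unfolding lyapunov_def history_state_def
    by (rule saga_lyapunov_saga_st_measurable[where g = g and u = "\<lambda>j z. history_index m (fst z) (snd z) j",
          OF g_measurable x0 x1 history_index_measurable range])
qed

lemma nn_integral_lyapunov_next_state:
  "(\<integral>\<^sup>+\<omega>. ennreal (lyapunov n (state (Suc m) \<omega>)) \<partial>M)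
     = (\<integral>\<^sup>+\<omega>. (\<Sum>k\<in>{1..N}. ennreal (lyapunov n (saga_step N g lam (stepsize (Suc m)) (state m \<omega>) k)))
           / of_nat (card {1..N}) \<partial>M)"
proof -
  have "(\<integral>\<^sup>+\<omega>. ennreal (lyapunov n (state (Suc m) \<omega>)) \<partial>M)
      = (\<integral>\<^sup>+\<omega>. ennreal (lyapunov n (history_state m (history m \<omega>) (U (Suc (Suc m)) \<omega>))) \<partial>M)"
    by (simp add: history_state_history)
  also have "\<dots> = (\<integral>\<^sup>+\<omega>. (\<Sum>k\<in>{1..N}. ennreal (lyapunov n (history_state m (history m \<omega>) k)))
      / of_nat (card {1..N}) \<partial>M)"
  proof -
    have next_index: "(\<lambda>p. snd (p (Suc (Suc m))))
        \<in> measurable (PiM {Suc (Suc m)} (\<lambda>_. borel \<Otimes>\<^sub>M count_space UNIV)) (count_space UNIV)"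
      using measurable_compose[OF measurable_component_singleton[of "Suc (Suc m)" "{Suc (Suc m)}"] measurable_snd]
      by simp
    have uniform: "distr M (count_space UNIV)
        (\<lambda>\<omega>. snd (restrict (\<lambda>_. ((0::'a, 0::'a), U (Suc (Suc m)) \<omega>)) {Suc (Suc m)} (Suc (Suc m))))
        = measure_pmf (pmf_of_set {1..N})"
      using U_unif[of "Suc (Suc m)"] by simp
    have "(\<lambda>z. ennreal (lyapunov n (history_state m (fst z) (snd z))))
        \<in> borel_measurable (history_space m \<Otimes>\<^sub>M count_space UNIV)"
      using lyapunov_history_state_measurable by measurable
    from nn_integral_indep_uniform[OF indep_history_next_index next_index uniform _ _ this] N
    show ?thesis by simp
  qed
  also have "\<dots> = (\<integral>\<^sup>+\<omega>. (\<Sum>k\<in>{1..N}. ennreal (lyapunov n (saga_step N g lam (stepsize (Suc m)) (state m \<omega>) k)))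
      / of_nat (card {1..N}) \<partial>M)"
    by (simp add: history_state_history_index)
  finally show ?thesis .
qed

lemma mean_lyapunov_recursion:
  assumes "n \<ge> 1"
  shows "mean_lyapunov (Suc n) \<le> ennreal (contraction n) * mean_lyapunov n + ennreal (noise * (stepsize n)\<^sup>2)"
proof -
  obtain m where n: "n = Suc m" using assms by (cases n) auto
  have "mean_lyapunov (Suc n) \<le> (\<integral>\<^sup>+\<omega>. ennreal (lyapunov n (state (Suc m) \<omega>)) \<partial>M)"
    unfolding mean_lyapunov_Suc lyapunov_def n
    using stepsize_decreasing[of "Suc m"] stepsize_pos[of "Suc (Suc m)"]
    by (intro nn_integral_mono ennreal_leI saga_lyapunov_mono) (auto intro!: mult_left_mono power_mono)
  also have "\<dots> = (\<integral>\<^sup>+\<omega>. (\<Sum>k\<in>{1..N}. ennreal (lyapunov n (saga_step N g lam (stepsize n) (state m \<omega>) k)))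
      / of_nat (card {1..N}) \<partial>M)"
    unfolding n by (rule nn_integral_lyapunov_next_state)
  also have "\<dots> \<le> (\<integral>\<^sup>+\<omega>. ennreal (contraction n * lyapunov n (state m \<omega>) + noise * (stepsize n)\<^sup>2) \<partial>M)"
  proof (intro nn_integral_mono sum_ennreal_divide_card_le)
    fix \<omega>
    obtain x t where st: "state m \<omega> = (x, t)" by fastforce
    show "(\<Sum>k\<in>{1..N}. lyapunov n (saga_step N g lam (stepsize n) (state m \<omega>) k))
        \<le> real (card {1..N}) * (contraction n * lyapunov n (state m \<omega>) + noise * (stepsize n)\<^sup>2)"
      unfolding st lyapunov_def contraction_def noise_def card_atLeastAtMost diff_Suc_1
      by (rule sum_saga_lyapunov_step_le[where g = g and xs = xstar and x = x,
            OF N lam less_imp_le[OF stepsize_pos[OF assms]] zero_sum lip_sum strong_sum])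
  qed (use N in \<open>auto simp: lyapunov_nonneg\<close>)
  also have "\<dots> = (\<integral>\<^sup>+\<omega>. ennreal (contraction n) * ennreal (lyapunov n (state m \<omega>))
      + ennreal (noise * (stepsize n)\<^sup>2) \<partial>M)"
    using contraction_nonneg[of n] noise_nonneg lyapunov_nonneg
    by (intro nn_integral_cong) (simp add: ennreal_mult)
  also have "\<dots> = ennreal (contraction n) * mean_lyapunov n + ennreal (noise * (stepsize n)\<^sup>2)"
    using lyapunov_state_measurable
    by (simp add: mean_lyapunov_Suc n nn_integral_add nn_integral_cmult emeasure_space_1)
  finally show ?thesis .
qed

lemma mean_lyapunov_rate: "\<exists>K>0. \<forall>n\<ge>1. mean_lyapunov n \<le> ennreal (K * stepsize n)"
proof -
  have "1 - 1 / (2 * real N) < 1" using N by simp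
  from polynomial_step_gap[OF c alpha strong(1) critical this, of "9 * L"]
  obtain \<kappa> where "\<kappa> > 0"
    and gap: "\<forall>\<^sub>F n in sequentially. stepsize (Suc n) - contraction n * stepsize n \<ge> \<kappa> * (stepsize n)\<^sup>2"
    by (auto simp: stepsize_def[abs_def] contraction_def)
  then show ?thesis
    using chung_bound_ennreal[OF stepsize_pos contraction_nonneg noise_nonneg _ mean_lyapunov_1_finite
        mean_lyapunov_recursion] by blast
qed

lemma nn_integral_dist_le_mean_lyapunov:
  "(\<integral>\<^sup>+\<omega>. ennreal ((norm (saga_X N g lam stepsize (X0 \<omega>) (X1 \<omega>) (\<lambda>j. U j \<omega>) (Suc m) - xstar))\<^sup>2) \<partial>M)
     \<le> mean_lyapunov (Suc m)"
proof -
  have "(\<integral>\<^sup>+\<omega>. ennreal ((norm (saga_X N g lam stepsize (X0 \<omega>) (X1 \<omega>) (\<lambda>j. U j \<omega>) (Suc m) - xstar))\<^sup>2) \<partial>M)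
      = (\<integral>\<^sup>+\<omega>. ennreal ((norm (fst (state m \<omega>) - xstar))\<^sup>2) \<partial>M)"
    using AE_saga_X_eq_state by (intro nn_integral_cong_AE) auto
  also have "\<dots> \<le> mean_lyapunov (Suc m)"
    unfolding mean_lyapunov_Suc lyapunov_def
    by (intro nn_integral_mono ennreal_leI saga_lyapunov_ge_dist) simp
  finally show ?thesis .
qed

lemma mean_square_error_rate:
  "\<exists>K>0. \<forall>n\<ge>1.
     (\<integral>\<^sup>+\<omega>. ennreal ((norm (saga_X N g lam (\<lambda>n. c / real n powr \<alpha>) (X0 \<omega>) (X1 \<omega>) (\<lambda>j. U j \<omega>) n
                              - xstar))\<^sup>2) \<partial>M)
       \<le> ennreal (K / real n powr \<alpha>)"
proof -
  obtain K where "K > 0" and K: "\<And>n. n \<ge> 1 \<Longrightarrow> mean_lyapunov n \<le> ennreal (K * stepsize n)"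
    using mean_lyapunov_rate by blast
  show ?thesis
  proof (intro exI[of _ "K * c"] conjI allI impI)
    fix n :: nat
    assume "n \<ge> 1"
    then obtain m where n: "n = Suc m"
      by (cases n) auto
    have "(\<integral>\<^sup>+\<omega>. ennreal ((norm (saga_X N g lam stepsize (X0 \<omega>) (X1 \<omega>) (\<lambda>j. U j \<omega>) n - xstar))\<^sup>2) \<partial>M)
        \<le> ennreal (K * stepsize n)"
      using nn_integral_dist_le_mean_lyapunov[of m] K[of n] n by simp
    then show "(\<integral>\<^sup>+\<omega>. ennreal ((norm (saga_X N g lam (\<lambda>n. c / real n powr \<alpha>) (X0 \<omega>) (X1 \<omega>) (\<lambda>j. U j \<omega>) n
        - xstar))\<^sup>2) \<partial>M) \<le> ennreal (K * c / real n powr \<alpha>)"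
      by (simp add: stepsize_def[abs_def])
  qed (use \<open>K > 0\<close> c in simp)
qed

end

theorem theorem3:
  fixes M :: "'s measure"
    and N :: nat
    and fk :: "nat \<Rightarrow> 'a::euclidean_space \<Rightarrow> real"
    and g :: "nat \<Rightarrow> 'a \<Rightarrow> 'a"
    and lam c \<alpha> L \<mu> :: real
    and xstar :: 'a
    and X0 X1 :: "'s \<Rightarrow> 'a"
    and U :: "nat \<Rightarrow> 's \<Rightarrow> nat"
  assumes N: "N \<ge> 1"
    and grad: "\<And>k x. k \<in> {1..N} \<Longrightarrow> (fk k has_derivative (\<lambda>h. g k x \<bullet> h)) (at x)"
    and lam: "0 \<le> lam" "lam \<le> 1"
    and c: "c > 0"
    and alpha: "1/2 < \<alpha>" "\<alpha> \<le> 1"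
    and P: "prob_space M"
    and X0: "X0 \<in> borel_measurable M" "integrable M (\<lambda>\<omega>. (norm (X0 \<omega>))\<^sup>2)"
    and X1: "X1 \<in> borel_measurable M" "integrable M (\<lambda>\<omega>. (norm (X1 \<omega>))\<^sup>2)"
    and U_meas: "\<And>j. j \<ge> 2 \<Longrightarrow> U j \<in> measurable M (count_space UNIV)"
    and U_unif: "\<And>j. j \<ge> 2 \<Longrightarrow>
        distr M (count_space UNIV) (U j) = measure_pmf (pmf_of_set {1..N})"
    and U_indep: "prob_space.indep_vars M (\<lambda>_. count_space UNIV) U {2..}"
    and X_U_indep: "prob_space.indep_set M
        {(\<lambda>\<omega>. (X0 \<omega>, X1 \<omega>)) -` A \<inter> space M | A. A \<in> sets borel}
        (sigma_sets (space M) (\<Union>j\<in>{2..}. {U j -` A \<inter> space M | A. A \<in> sets (count_space UNIV)}))"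
    and A1_cont: "continuous_on UNIV (\<lambda>x. (1 / real N) *\<^sub>R (\<Sum>k\<in>{1..N}. g k x))"
    and A1_zero: "(1 / real N) *\<^sub>R (\<Sum>k\<in>{1..N}. g k xstar) = 0"
    and A1_unique: "\<And>x. (1 / real N) *\<^sub>R (\<Sum>k\<in>{1..N}. g k x) = 0 \<Longrightarrow> x = xstar"
    and A3: "L > 0" "\<And>x. (1 / real N) * (\<Sum>k\<in>{1..N}. (norm (g k x - g k xstar))\<^sup>2)
                          \<le> L * (norm (x - xstar))\<^sup>2"
    and A5: "\<mu> > 0" "\<And>x. (x - xstar) \<bullet> ((1 / real N) *\<^sub>R (\<Sum>k\<in>{1..N}. g k x))
                          \<ge> \<mu> * (norm (x - xstar))\<^sup>2"
    and step1: "2 * c * \<mu> \<le> 2 powr \<alpha>"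
    and step2: "\<alpha> = 1 \<Longrightarrow> 2 * c * \<mu> > 1"
  shows "\<exists>K>0. \<forall>n\<ge>1.
    (\<integral>\<^sup>+ \<omega>. ennreal ((norm (saga_X N g lam (\<lambda>n. c / real n powr \<alpha>) (X0 \<omega>) (X1 \<omega>)
                                  (\<lambda>j. U j \<omega>) n - xstar))\<^sup>2) \<partial>M)
      \<le> ennreal (K / real n powr \<alpha>)"
proof -
  have g_measurable: "g k \<in> borel_measurable borel" if "k \<in> {1..N}" for k
    using grad[OF that] by (rule gradient_borel_measurable)
  have "\<alpha> > 0"
    using alpha(1) by simp
  interpret saga_setting M N g lam c \<alpha> L \<mu> xstar X0 X1 U
    by (intro saga_setting.intro[OF P] saga_setting_axioms.intro N g_measurable lam c \<open>\<alpha> > 0\<close> alpha(2)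
        X0 X1 U_meas U_unif U_indep X_U_indep A1_zero less_imp_le[OF A3(1)] A3(2) A5 step2)
  show ?thesis
    by (rule mean_square_error_rate)
qed

end
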